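(* For integers $k,l\ge 0$ define \[A(k,l)=\{(x_1,\dots,x_k)\in\mathbb{Z}^k:1\le x_1<\cdots<x_k,\ x_1+\cdots+x_k=l\},\] \[B(k,l)=\{(x_1,\dots,x_k)\in\mathbb{Z}^k:0\le x_1<\cdots<x_k,\ x_1+\cdots+x_k=l\}.\] Then for every integer $n\ge0$, \[p(n)=\sum_{0\le k\le l\le n}|A(k,l)|\,|B(k,n-l)|=\sum_{0\le k\le l\le n}|B(k,l-k)|\,|B(k,n-l)|,\] where $p(n)$ is the number of partitions of $n$.
   Context: For $k=0$ the sets $A(0,l)$ and $B(0,l)$ consist of the empty tuple if $l=0$ and are empty otherwise. $p(0)=1$. *)

theory Defs
  imports Main "HOL-Library.Multiset"
begin

definition setA :: "nat \<Rightarrow> nat \<Rightarrow> int list set" where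
  "setA k l = {xs. length xs = k \<and> sorted_wrt (<) xs \<and> (\<forall>i<k. 1 \<le> xs ! i) \<and> sum_list xs = int l}"

definition setB :: "nat \<Rightarrow> nat \<Rightarrow> int list set" where
  "setB k l = {xs. length xs = k \<and> sorted_wrt (<) xs \<and> (\<forall>i<k. 0 \<le> xs ! i) \<and> sum_list xs = int l}"

definition partition_count :: "nat \<Rightarrow> nat" where
  "partition_count n = card {M :: nat multiset. (\<forall>x\<in>#M. 0 < x) \<and> sum_mset M = n}"

end

theory Submission
  imports Defs
begin

text \<open>
  Peeling the first row and first column off the Young diagram of a partition with largest
  part \<open>\<lambda>\<^sub>1\<close> and \<open>r\<close> parts records an arm \<open>\<lambda>\<^sub>1 - 1\<close> and a leg \<open>r - 1\<close>; repeating this on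
  the remaining diagram yields its Frobenius coordinates, two strictly decreasing sequences
  \<open>a\<^sub>1 > \<dots> > a\<^sub>k \<ge> 0\<close> and \<open>b\<^sub>1 > \<dots> > b\<^sub>k \<ge> 0\<close> with \<open>\<Sum>a\<^sub>i + \<Sum>b\<^sub>i + k = n\<close>, and this is a
  bijection. With \<open>l = \<Sum>a\<^sub>i + k\<close>, the reversed sequences \<open>(a\<^sub>i)\<close> and \<open>(b\<^sub>i)\<close> range exactly
  over \<open>B(k,l-k) \<times> B(k,n-l)\<close>, and adding 1 to every entry identifies \<open>B(k,l-k)\<close> with \<open>A(k,l)\<close>.
\<close>

lemma sorted_wrt_replicate: "R x x \<Longrightarrow> sorted_wrt R (replicate n x)"
  by (induction n) auto

definition is_partition_list :: "nat list \<Rightarrow> bool" where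
  "is_partition_list xs \<longleftrightarrow> sorted_wrt (\<ge>) xs \<and> (\<forall>x\<in>set xs. 0 < x)"

definition remove_column :: "nat list \<Rightarrow> nat list" where
  "remove_column xs = map (\<lambda>x. x - 1) (filter (\<lambda>x. 2 \<le> x) xs)"

lemma length_remove_column [termination_simp]: "length (remove_column xs) \<le> length xs"
  by (simp add: remove_column_def length_filter_le)

fun frobenius :: "nat list \<Rightarrow> nat list \<times> nat list" where
  "frobenius [] = ([], [])"
| "frobenius (x # xs) =
     (case frobenius (remove_column xs) of (as, bs) \<Rightarrow> ((x - 1) # as, length xs # bs))"

fun of_frobenius :: "nat list \<Rightarrow> nat list \<Rightarrow> nat list" where
  "of_frobenius (a # as) (b # bs) =
     (let m = of_frobenius as bs in Suc a # map Suc m @ replicate (b - length m) 1)"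
| "of_frobenius _ _ = []"

definition frobenius_pair :: "nat list \<Rightarrow> nat list \<Rightarrow> bool" where
  "frobenius_pair as bs \<longleftrightarrow> sorted_wrt (>) as \<and> sorted_wrt (>) bs \<and> length as = length bs"

lemma sum_list_remove_column:
  "\<forall>x\<in>set xs. 0 < x \<Longrightarrow> sum_list (remove_column xs) + length xs = sum_list xs"
  by (induction xs) (auto simp: remove_column_def)

lemma is_partition_list_remove_column:
  assumes "is_partition_list (x # xs)"
  shows "is_partition_list (remove_column xs)" and "\<forall>y\<in>set (remove_column xs). y \<le> x - 1"
  using assms unfolding is_partition_list_def remove_column_def
  by (auto simp: sorted_wrt_map sorted_wrt_filter intro: sorted_wrt_mono_rel[of _ "(\<ge>)"])

lemma add_column_remove_column:
  "is_partition_list xs \<Longrightarrow>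
     map Suc (remove_column xs) @ replicate (length xs - length (remove_column xs)) 1 = xs"
proof (induction xs)
  case (Cons x xs)
  then have "is_partition_list xs" by (auto simp: is_partition_list_def)
  show ?case
  proof (cases "2 \<le> x")
    case True
    then show ?thesis
      using Cons.IH[OF \<open>is_partition_list xs\<close>] by (simp add: remove_column_def Suc_diff_le length_filter_le)
  next
    case False
    with Cons.prems have "\<forall>y\<in>set (x # xs). y = 1" by (force simp: is_partition_list_def)
    moreover from this have "filter (\<lambda>y. 2 \<le> y) xs = []" by (auto simp: filter_empty_conv)
    ultimately show ?thesis
      using replicate_length_same[of "x # xs" 1] by (simp add: remove_column_def)
  qed
qed (simp add: remove_column_def)

lemma remove_column_add_column:
  "\<forall>x\<in>set xs. 0 < x \<Longrightarrow> remove_column (map Suc xs @ replicate r 1) = xs"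
  by (induction xs) (auto simp: remove_column_def)

text \<open>
  The bounds \<open>\<alpha>\<close> and \<open>\<beta>\<close> strengthen the induction: after peeling a hook, the previous arm and
  leg bound all later ones.
\<close>
lemma frobenius_pair_frobenius:
  assumes "is_partition_list xs" "\<forall>x\<in>set xs. x \<le> \<alpha>" "length xs \<le> \<beta>"
    and "frobenius xs = (as, bs)"
  shows "frobenius_pair as bs \<and> (\<forall>a\<in>set as. a < \<alpha>) \<and> (\<forall>b\<in>set bs. b < \<beta>)
      \<and> sum_list as + sum_list bs + length as = sum_list xs"
  using assms
proof (induction xs arbitrary: \<alpha> \<beta> as bs rule: frobenius.induct)
  case 1
  then show ?case by (auto simp: frobenius_pair_def)
next
  case (2 x xs)
  obtain as' bs' where frob: "frobenius (remove_column xs) = (as', bs')" by force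
  with "2.prems"(4) have as: "as = (x - 1) # as'" and bs: "bs = length xs # bs'" by auto
  have IH: "frobenius_pair as' bs' \<and> (\<forall>a\<in>set as'. a < x - 1) \<and> (\<forall>b\<in>set bs'. b < length xs)
      \<and> sum_list as' + sum_list bs' + length as' = sum_list (remove_column xs)"
    using "2.IH"[OF is_partition_list_remove_column[OF "2.prems"(1)] length_remove_column frob] .
  from "2.prems"(1,2) have "0 < x" "x \<le> \<alpha>" "\<forall>y\<in>set xs. 0 < y"
    by (auto simp: is_partition_list_def)
  then show ?case
    using IH "2.prems"(3) sum_list_remove_column[of xs] by (auto simp: as bs frobenius_pair_def)
qed

lemma of_frobenius_frobenius:
  "is_partition_list xs \<Longrightarrow> case_prod of_frobenius (frobenius xs) = xs"
proof (induction xs rule: frobenius.induct)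
  case (2 x xs)
  obtain as bs where frob: "frobenius (remove_column xs) = (as, bs)" by force
  have "of_frobenius as bs = remove_column xs"
    using "2.IH"[OF is_partition_list_remove_column(1)[OF "2.prems"]] frob by simp
  moreover from "2.prems" have "0 < x" "is_partition_list xs" by (auto simp: is_partition_list_def)
  ultimately show ?case using frob add_column_remove_column[of xs] by (simp add: Let_def)
qed simp

lemma of_frobenius_partition_list:
  assumes "frobenius_pair as bs" "\<forall>a\<in>set as. a < \<alpha>" "\<forall>b\<in>set bs. b < \<beta>"
  shows "is_partition_list (of_frobenius as bs) \<and> (\<forall>x\<in>set (of_frobenius as bs). x \<le> \<alpha>)
      \<and> length (of_frobenius as bs) \<le> \<beta>
      \<and> sum_list (of_frobenius as bs) = sum_list as + sum_list bs + length as"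
  using assms
proof (induction as bs arbitrary: \<alpha> \<beta> rule: of_frobenius.induct)
  case (1 a as b bs)
  define m where "m = of_frobenius as bs"
  from "1.prems" have "frobenius_pair as bs" "\<forall>a'\<in>set as. a' < a" "\<forall>b'\<in>set bs. b' < b"
    by (auto simp: frobenius_pair_def)
  from "1.IH"[OF this] have IH: "is_partition_list m \<and> (\<forall>x\<in>set m. x \<le> a) \<and> length m \<le> b
      \<and> sum_list m = sum_list as + sum_list bs + length as"
    by (simp add: m_def)
  then show ?case
    using "1.prems" unfolding m_def[symmetric] of_frobenius.simps Let_def
    by (auto simp: is_partition_list_def frobenius_pair_def sorted_wrt_append sorted_wrt_map
        sum_list_Suc sum_list_replicate sorted_wrt_replicate)
qed (auto simp: is_partition_list_def frobenius_pair_def)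

lemma frobenius_of_frobenius:
  "frobenius_pair as bs \<Longrightarrow> frobenius (of_frobenius as bs) = (as, bs)"
proof (induction as bs rule: of_frobenius.induct)
  case (1 a as b bs)
  define m where "m = of_frobenius as bs"
  from "1.prems" have pair: "frobenius_pair as bs" "\<forall>a'\<in>set as. a' < a" "\<forall>b'\<in>set bs. b' < b"
    by (auto simp: frobenius_pair_def)
  then have "is_partition_list m" "length m \<le> b"
    using of_frobenius_partition_list[OF pair] by (simp_all add: m_def)
  then have "remove_column (map Suc m @ replicate (b - length m) 1) = m"
    unfolding is_partition_list_def by (blast intro: remove_column_add_column)
  then show ?case
    using "1.IH"[OF pair(1)] \<open>length m \<le> b\<close> by (simp add: m_def[symmetric] Let_def)
qed (auto simp: frobenius_pair_def)

definition partition_lists :: "nat \<Rightarrow> nat list set" where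
  "partition_lists n = {xs. is_partition_list xs \<and> sum_list xs = n}"

definition frobenius_pairs :: "nat \<Rightarrow> (nat list \<times> nat list) set" where
  "frobenius_pairs n = {(as, bs). frobenius_pair as bs \<and> sum_list as + sum_list bs + length as = n}"

lemma partition_count_eq_card_partition_lists: "partition_count n = card (partition_lists n)"
proof -
  have "bij_betw (\<lambda>M. rev (sorted_list_of_multiset M))
      {M. (\<forall>x\<in>#M. 0 < x) \<and> sum_mset M = n} (partition_lists n)"
  proof (rule bij_betw_byWitness[where f' = mset])
    show "\<forall>xs\<in>partition_lists n. rev (sorted_list_of_multiset (mset xs)) = xs"
    proof
      fix xs assume "xs \<in> partition_lists n"
      then have "sort xs = rev xs"
        by (intro properties_for_sort) (auto simp: partition_lists_def is_partition_list_def sorted_wrt_rev)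
      then show "rev (sorted_list_of_multiset (mset xs)) = xs" by simp
    qed
    show "mset ` partition_lists n \<subseteq> {M. (\<forall>x\<in>#M. 0 < x) \<and> sum_mset M = n}"
      by (auto simp: partition_lists_def is_partition_list_def sum_mset_sum_list)
    show "(\<lambda>M. rev (sorted_list_of_multiset M)) ` {M. (\<forall>x\<in>#M. 0 < x) \<and> sum_mset M = n}
        \<subseteq> partition_lists n"
      by (auto simp: partition_lists_def is_partition_list_def sorted_wrt_rev
          simp flip: sum_mset_sum_list)
  qed simp
  then show ?thesis unfolding partition_count_def by (rule bij_betw_same_card)
qed

lemma bij_betw_frobenius: "bij_betw frobenius (partition_lists n) (frobenius_pairs n)"
proof (rule bij_betw_byWitness[where f' = "case_prod of_frobenius"])
  show "\<forall>xs\<in>partition_lists n. case_prod of_frobenius (frobenius xs) = xs"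
    by (simp add: partition_lists_def of_frobenius_frobenius)
  show "\<forall>p\<in>frobenius_pairs n. frobenius (case_prod of_frobenius p) = p"
    by (auto simp: frobenius_pairs_def frobenius_of_frobenius)
  show "frobenius ` partition_lists n \<subseteq> frobenius_pairs n"
  proof (rule image_subsetI)
    fix xs assume "xs \<in> partition_lists n"
    moreover obtain as bs where "frobenius xs = (as, bs)" by force
    moreover have "\<forall>x\<in>set xs. x \<le> sum_list xs" by (simp add: member_le_sum_list)
    ultimately show "frobenius xs \<in> frobenius_pairs n"
      using frobenius_pair_frobenius[of xs "sum_list xs" "length xs" as bs]
      by (auto simp: partition_lists_def frobenius_pairs_def)
  qed
  show "case_prod of_frobenius ` frobenius_pairs n \<subseteq> partition_lists n"
  proof (rule image_subsetI)
    fix p assume "p \<in> frobenius_pairs n"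
    moreover obtain as bs where "p = (as, bs)" by force
    moreover have "\<forall>a\<in>set as. a < Suc (sum_list as)" "\<forall>b\<in>set bs. b < Suc (sum_list bs)"
      by (auto simp: le_imp_less_Suc member_le_sum_list)
    ultimately show "case_prod of_frobenius p \<in> partition_lists n"
      using of_frobenius_partition_list[of as bs]
      by (auto simp: partition_lists_def frobenius_pairs_def)
  qed
qed

lemma setB_iff:
  "xs \<in> setB k m \<longleftrightarrow> length xs = k \<and> sorted_wrt (<) xs \<and> (\<forall>x\<in>set xs. 0 \<le> x) \<and> sum_list xs = int m"
  by (auto simp: setB_def all_set_conv_all_nth)

lemma setA_iff:
  "xs \<in> setA k l \<longleftrightarrow> length xs = k \<and> sorted_wrt (<) xs \<and> (\<forall>x\<in>set xs. 1 \<le> x) \<and> sum_list xs = int l"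
  by (auto simp: setA_def all_set_conv_all_nth)

lemma map_add_in_setA: "ys \<in> setB k (l - k) \<Longrightarrow> k \<le> l \<Longrightarrow> map (\<lambda>y. y + 1) ys \<in> setA k l"
  by (auto simp: setA_iff setB_iff sum_list_addf sum_list_triv intro: sorted_wrt_map_mono)

lemma map_diff_in_setB: "xs \<in> setA k l \<Longrightarrow> k \<le> l \<Longrightarrow> map (\<lambda>x. x - 1) xs \<in> setB k (l - k)"
  by (auto simp: setA_iff setB_iff sum_list_subtractf sum_list_triv of_nat_diff
      intro: sorted_wrt_map_mono)

lemma setA_eq_image_setB:
  assumes "k \<le> l" shows "setA k l = map (\<lambda>y. y + 1) ` setB k (l - k)"
proof (intro equalityI subsetI)
  fix xs assume "xs \<in> setA k l"
  with assms show "xs \<in> map (\<lambda>y. y + 1) ` setB k (l - k)"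
    by (intro image_eqI[OF _ map_diff_in_setB]) (simp_all add: comp_def)
qed (use assms in \<open>auto simp: map_add_in_setA\<close>)

lemma card_setA: "k \<le> l \<Longrightarrow> card (setA k l) = card (setB k (l - k))"
  by (simp add: setA_eq_image_setB card_image inj_mapI inj_on_def)

lemma finite_setB: "finite (setB k m)"
proof (rule finite_subset)
  show "setB k m \<subseteq> {xs. set xs \<subseteq> {0..int m} \<and> length xs = k}"
    by (auto simp: setB_iff) (metis member_le_sum_list)
qed (simp add: finite_lists_length_eq)

definition decr_lists :: "nat \<Rightarrow> nat \<Rightarrow> nat list set" where
  "decr_lists k m = {xs. length xs = k \<and> sorted_wrt (>) xs \<and> sum_list xs = m}"

lemma frobenius_pairs_eq_UN:
  "frobenius_pairs n = (\<Union>l\<le>n. \<Union>k\<le>l. decr_lists k (l - k) \<times> decr_lists k (n - l))"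
proof (intro equalityI subsetI; clarify)
  fix as bs assume "(as, bs) \<in> frobenius_pairs n"
  then show "(as, bs) \<in> (\<Union>l\<le>n. \<Union>k\<le>l. decr_lists k (l - k) \<times> decr_lists k (n - l))"
    unfolding frobenius_pairs_def frobenius_pair_def decr_lists_def
    by (intro UN_I[of "sum_list as + length as"] UN_I[of "length as"]) auto
qed (auto simp: frobenius_pairs_def frobenius_pair_def decr_lists_def)

lemma bij_betw_decr_lists_setB: "bij_betw (\<lambda>xs. rev (map int xs)) (decr_lists k m) (setB k m)"
proof (rule bij_betw_byWitness[where f' = "\<lambda>ys. rev (map nat ys)"])
  show "\<forall>xs\<in>decr_lists k m. rev (map nat (rev (map int xs))) = xs"
    by (simp add: rev_map comp_def)
  show "\<forall>ys\<in>setB k m. rev (map int (rev (map nat ys))) = ys"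
    by (auto simp: setB_iff rev_map comp_def intro: map_idI)
  show "(\<lambda>xs. rev (map int xs)) ` decr_lists k m \<subseteq> setB k m"
    by (auto simp: decr_lists_def setB_iff sorted_wrt_rev sorted_wrt_map sum_list_of_nat)
  show "(\<lambda>ys. rev (map nat ys)) ` setB k m \<subseteq> decr_lists k m"
  proof (rule image_subsetI)
    fix ys assume ys: "ys \<in> setB k m"
    then have "map int (map nat ys) = ys" by (auto simp: setB_iff intro: map_idI)
    with ys have "int (sum_list (map nat ys)) = int m"
      by (metis sum_list_of_nat setB_iff)
    with ys show "rev (map nat ys) \<in> decr_lists k m"
      by (auto simp: decr_lists_def setB_iff sorted_wrt_rev sorted_wrt_map
          elim!: sorted_wrt_mono_rel[rotated])
  qed
qed

lemma card_frobenius_pairs: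
  "card (frobenius_pairs n) = (\<Sum>l\<le>n. \<Sum>k\<le>l. card (setB k (l - k)) * card (setB k (n - l)))"
proof -
  have card_decr_lists: "card (decr_lists k m) = card (setB k m)" for k m
    by (rule bij_betw_same_card[OF bij_betw_decr_lists_setB])
  have finite_decr_lists: "finite (decr_lists k m)" for k m
    using bij_betw_finite[OF bij_betw_decr_lists_setB] finite_setB by blast
  have "card (frobenius_pairs n)
      = (\<Sum>l\<le>n. card (\<Union>k\<le>l. decr_lists k (l - k) \<times> decr_lists k (n - l)))"
    unfolding frobenius_pairs_eq_UN
    by (rule card_UN_disjoint) (auto simp: finite_decr_lists, auto simp: decr_lists_def)
  also have "\<dots> = (\<Sum>l\<le>n. \<Sum>k\<le>l. card (decr_lists k (l - k) \<times> decr_lists k (n - l)))"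
    by (intro sum.cong refl card_UN_disjoint) (auto simp: finite_decr_lists, auto simp: decr_lists_def)
  finally show ?thesis by (simp add: card_cartesian_product card_decr_lists)
qed

theorem lemma3p2:
  fixes n :: nat
  shows "partition_count n = (\<Sum>l\<le>n. \<Sum>k\<le>l. card (setA k l) * card (setB k (n - l)))
       \<and> partition_count n = (\<Sum>l\<le>n. \<Sum>k\<le>l. card (setB k (l - k)) * card (setB k (n - l)))"
proof
  show "partition_count n = (\<Sum>l\<le>n. \<Sum>k\<le>l. card (setB k (l - k)) * card (setB k (n - l)))"
    using partition_count_eq_card_partition_lists bij_betw_same_card[OF bij_betw_frobenius]
      card_frobenius_pairs by simp
  then show "partition_count n = (\<Sum>l\<le>n. \<Sum>k\<le>l. card (setA k l) * card (setB k (n - l)))"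
    by (simp add: card_setA)
qed

end
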